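(* Let $X\subseteq G_n$ be a finite set of Hermitian Pauli operators. If there exist a Pauli operator $x$, a determining tree $\tau_x$ for $x$ over $X$, and a determining tree $\tau'_{-x}$ for $-x$ over $X$ such that $D(\tau_x)=D(\tau'_{-x})$, then $X$ is state-independently AvN in a partial closure, i.e. $\mathbb{T}_{\mathbb{Z}_2}(\overline{X})$ is inconsistent.
   Context: $G_n$ is the $n$-qubit Pauli group ($c\,P_1\otimes\cdots\otimes P_n$, $c\in\{\pm1,\pm i\}$, $P_j\in\{I,X,Y,Z\}$). The partial closure $\overline{X}$ of $X$ in $G_n$ is the smallest subset of $G_n$ containing $X\cup\{I\}$ that is closed under products of commuting pairs (if $a,b\in\overline{X}$ and $ab=ba$ then $ab\in\overline{X}$); equivalently the smallest abelian partial group in $G_n$ (with commutativity as the commeasurability relation and multiplication defined on commuting pairs) containing $X$. For a set $Y$ of Hermitian Pauli operators, its measurement cover $\mathcal{M}_Y$ is the family of maximal pairwise-commuting subsets of $Y$, and its linear theory is $\mathbb{T}_{\mathbb{Z}_2}(Y)=\{\langle C,r,a\rangle: C\in\mathcal{M}_Y,\ r:C\to\mathbb{Z}_2,\ a\in\mathbb{Z}_2,\ \prod_{y\in C}y^{r(y)}=(-1)^aI\}$; it is inconsistent if no $g:Y\to\mathbb{Z}_2$ satisfies $\sum_{y\in C}r(y)g(y)=a$ (mod 2) for all $\langle C,r,a\rangle$ in it. $X$ is state-independently AvN in a partial closure if $\mathbb{T}_{\mathbb{Z}_2}(\overline{X})$ is inconsistent. A determining tree $\tau_x$ for a Pauli operator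 $x$ over $X$ is a finite rooted tree whose nodes are labelled by Pauli operators and whose leaves are labelled by elements of $X$, such that the root is $x$, the children of any node pairwise commute, and every non-leaf node is the operator product of its children. The determining set $D(\tau_x)$ is the set of operators occurring an odd number of times as leaf labels of $\tau_x$. *)

theory Defs
  imports Main "HOL-Library.Z2"
begin

datatype pauli1 = PI | PX | PY | PZ

text \<open>Single-qubit product: returns (k, R) meaning  P * Q = i^k R.\<close>
fun mult1 :: "pauli1 \<Rightarrow> pauli1 \<Rightarrow> nat \<times> pauli1" where
  "mult1 PI q = (0, q)"
| "mult1 p PI = (0, p)"
| "mult1 PX PX = (0, PI)"
| "mult1 PY PY = (0, PI)"
| "mult1 PZ PZ = (0, PI)"
| "mult1 PX PY = (1, PZ)"
| "mult1 PY PX = (3, PZ)"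
| "mult1 PY PZ = (1, PX)"
| "mult1 PZ PY = (3, PX)"
| "mult1 PZ PX = (1, PY)"
| "mult1 PX PZ = (3, PY)"

text \<open>A Pauli operator  i^k P_1 \<otimes> ... \<otimes> P_n  is represented by (k, [P_1,...,P_n]).\<close>
type_synonym pauli = "nat \<times> pauli1 list"

definition pauli_op :: "nat \<Rightarrow> pauli \<Rightarrow> bool" where
  "pauli_op n p \<longleftrightarrow> fst p < 4 \<and> length (snd p) = n"

definition pmult :: "pauli \<Rightarrow> pauli \<Rightarrow> pauli" where
  "pmult p q = ((fst p + fst q + sum_list (map2 (\<lambda>a b. fst (mult1 a b)) (snd p) (snd q))) mod 4,
                map2 (\<lambda>a b. snd (mult1 a b)) (snd p) (snd q))"

definition pid :: "nat \<Rightarrow> pauli" where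
  "pid n = (0, replicate n PI)"

definition pneg :: "pauli \<Rightarrow> pauli" where
  "pneg p = ((fst p + 2) mod 4, snd p)"

definition pcommute :: "pauli \<Rightarrow> pauli \<Rightarrow> bool" where
  "pcommute a b \<longleftrightarrow> pmult a b = pmult b a"

definition hermitian :: "nat \<Rightarrow> pauli \<Rightarrow> bool" where
  "hermitian n p \<longleftrightarrow> pauli_op n p \<and> (fst p = 0 \<or> fst p = 2)"

inductive_set partial_closure :: "nat \<Rightarrow> pauli set \<Rightarrow> pauli set" for n X where
  base: "x \<in> X \<Longrightarrow> x \<in> partial_closure n X"
| ident: "pid n \<in> partial_closure n X"
| prod: "a \<in> partial_closure n X \<Longrightarrow> b \<in> partial_closure n X \<Longrightarrow> pcommute a b
          \<Longrightarrow> pmult a b \<in> partial_closure n X"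

definition pairwise_commuting :: "pauli set \<Rightarrow> bool" where
  "pairwise_commuting C \<longleftrightarrow> (\<forall>a\<in>C. \<forall>b\<in>C. pcommute a b)"

definition meas_cover :: "pauli set \<Rightarrow> pauli set set" where
  "meas_cover Y = {C. C \<subseteq> Y \<and> pairwise_commuting C \<and>
                      (\<forall>C'. C \<subseteq> C' \<and> C' \<subseteq> Y \<and> pairwise_commuting C' \<longrightarrow> C' = C)}"

definition sign_id :: "nat \<Rightarrow> bit \<Rightarrow> pauli" where
  "sign_id n a = ((if a = 1 then 2 else 0), replicate n PI)"

text \<open>Product  \<Prod>_{y\<in>C} y^{r(y)}  of a finite pairwise commuting set (order irrelevant);
  computed along an enumeration of C.\<close>
definition prod_pow :: "nat \<Rightarrow> pauli set \<Rightarrow> (pauli \<Rightarrow> bit) \<Rightarrow> pauli \<Rightarrow> bool" where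
  "prod_pow n C r p \<longleftrightarrow>
     (\<exists>ys. distinct ys \<and> set ys = C \<and>
        foldr pmult (map (\<lambda>y. if r y = 1 then y else pid n) ys) (pid n) = p)"

definition linear_theory :: "nat \<Rightarrow> pauli set \<Rightarrow> (pauli set \<times> (pauli \<Rightarrow> bit) \<times> bit) set" where
  "linear_theory n Y = {(C, r, a). C \<in> meas_cover Y \<and> (\<forall>y. y \<notin> C \<longrightarrow> r y = 0)
                          \<and> prod_pow n C r (sign_id n a)}"

definition theory_inconsistent :: "pauli set \<Rightarrow> (pauli set \<times> (pauli \<Rightarrow> bit) \<times> bit) set \<Rightarrow> bool" where
  "theory_inconsistent Y T \<longleftrightarrow>
     \<not> (\<exists>g :: pauli \<Rightarrow> bit. \<forall>(C, r, a) \<in> T. (\<Sum>y\<in>C. r y * g y) = a)"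

definition state_indep_AvN_partial_closure :: "nat \<Rightarrow> pauli set \<Rightarrow> bool" where
  "state_indep_AvN_partial_closure n X \<longleftrightarrow>
     theory_inconsistent (partial_closure n X) (linear_theory n (partial_closure n X))"

datatype ptree = PNode pauli "ptree list"

fun label :: "ptree \<Rightarrow> pauli" where
  "label (PNode p _) = p"

fun leaves :: "ptree \<Rightarrow> pauli list" where
  "leaves (PNode p []) = [p]"
| "leaves (PNode p (t # ts)) = concat (map leaves (t # ts))"

fun valid_tree :: "pauli set \<Rightarrow> ptree \<Rightarrow> bool" where
  "valid_tree X (PNode p []) \<longleftrightarrow> p \<in> X"
| "valid_tree X (PNode p (t # ts)) \<longleftrightarrow>
     (\<forall>s\<in>set (t # ts). valid_tree X s)
     \<and> (\<forall>i<length (t # ts). \<forall>j<length (t # ts). pcommute (label ((t # ts) ! i)) (label ((t # ts) ! j)))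
     \<and> p = foldr pmult (map label ts) (label t)"

definition determining_tree :: "nat \<Rightarrow> pauli set \<Rightarrow> pauli \<Rightarrow> ptree \<Rightarrow> bool" where
  "determining_tree n X x t \<longleftrightarrow> label t = x \<and> valid_tree X t"

definition det_set :: "ptree \<Rightarrow> pauli set" where
  "det_set t = {p. odd (count_list (leaves t) p)}"

end

(*
  Suppose g : closure(X) -> Z_2 satisfied the linear theory. Every commuting set in the
  closure whose product is (-1)^a I is contained in a context of the measurement cover, so g
  sums to a on it. Applied to {I} and to the triples {a, b, ab} this makes g additive on
  commuting pairs, hence along a determining tree g(x) is the sum of g over the leaves, which
  mod 2 is the sum over the determining set. Equal determining sets give g(x) = g(-x), while
  the pair {x, -x} with product -I forces g(x) + g(-x) = 1.
*)

theory Submission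
  imports Defs
begin

lemma mult1_assoc_op: "snd (mult1 (snd (mult1 a b)) c) = snd (mult1 a (snd (mult1 b c)))"
  by (cases a; cases b; cases c) auto

lemma mult1_assoc_phase:
  "(fst (mult1 a b) + fst (mult1 (snd (mult1 a b)) c)) mod 4
     = (fst (mult1 b c) + fst (mult1 a (snd (mult1 b c)))) mod 4"
  by (cases a; cases b; cases c) auto

lemma mult1_self: "mult1 a a = (0, PI)"
  by (cases a) auto

lemma mult1_PI_right: "mult1 a PI = (0, a)"
  by (cases a) auto

abbreviation tensor_phase :: "pauli1 list \<Rightarrow> pauli1 list \<Rightarrow> nat" where
  "tensor_phase xs ys \<equiv> sum_list (map2 (\<lambda>a b. fst (mult1 a b)) xs ys)"

abbreviation tensor_mult :: "pauli1 list \<Rightarrow> pauli1 list \<Rightarrow> pauli1 list" where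
  "tensor_mult xs ys \<equiv> map2 (\<lambda>a b. snd (mult1 a b)) xs ys"

lemma tensor_mult_assoc: "tensor_mult (tensor_mult xs ys) zs = tensor_mult xs (tensor_mult ys zs)"
proof (induction xs arbitrary: ys zs)
  case (Cons x xs) then show ?case by (cases ys; cases zs) (auto simp: mult1_assoc_op)
qed simp

lemma tensor_phase_assoc:
  assumes "length xs = length ys" "length ys = length zs"
  shows "(tensor_phase xs ys + tensor_phase (tensor_mult xs ys) zs) mod 4
       = (tensor_phase ys zs + tensor_phase xs (tensor_mult ys zs)) mod 4"
  using assms
proof (induction xs ys zs rule: list_induct3)
  case (Cons x xs y ys z zs)
  then show ?case
    using mod_add_cong[OF mult1_assoc_phase[of x y z] Cons.IH] by (simp add: ac_simps)
qed simp

lemma tensor_self: "tensor_phase xs xs = 0" "tensor_mult xs xs = replicate (length xs) PI"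
  by (induction xs) (auto simp: mult1_self)

lemma tensor_PI_left: "tensor_phase (replicate (length ys) PI) ys = 0"
    "tensor_mult (replicate (length ys) PI) ys = ys"
  by (induction ys) auto

lemma tensor_PI_right: "tensor_phase xs (replicate (length xs) PI) = 0"
    "tensor_mult xs (replicate (length xs) PI) = xs"
  by (induction xs) (auto simp: mult1_PI_right)

lemma mod_add3_left_eq: "(a mod m + b + c) mod m = (a + b + c) mod (m::'a::euclidean_semiring_cancel)"
  by (simp add: add.assoc mod_add_left_eq)

lemma mod_add3_middle_eq: "(a + b mod m + c) mod m = (a + b + c) mod (m::'a::euclidean_semiring_cancel)"
  by (metis mod_add_left_eq mod_add_right_eq)

lemma pmult_assoc:
  assumes "pauli_op n a" "pauli_op n b" "pauli_op n c"
  shows "pmult (pmult a b) c = pmult a (pmult b c)"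
proof -
  obtain ka xs kb ys kc zs where abc: "a = (ka, xs)" "b = (kb, ys)" "c = (kc, zs)"
    by (cases a, cases b, cases c) blast
  have "(tensor_phase xs ys + tensor_phase (tensor_mult xs ys) zs) mod 4
       = (tensor_phase ys zs + tensor_phase xs (tensor_mult ys zs)) mod 4"
    using assms abc by (intro tensor_phase_assoc) (auto simp: pauli_op_def)
  then have "(ka + kb + kc + (tensor_phase xs ys + tensor_phase (tensor_mult xs ys) zs)) mod 4
       = (ka + kb + kc + (tensor_phase ys zs + tensor_phase xs (tensor_mult ys zs))) mod 4"
    by (rule mod_add_cong[OF refl])
  then have "fst (pmult (pmult a b) c) = fst (pmult a (pmult b c))"
    by (simp add: abc pmult_def mod_add3_left_eq mod_add3_middle_eq, simp only: ac_simps)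
  then show ?thesis
    by (simp add: prod_eq_iff abc pmult_def tensor_mult_assoc)
qed

lemma pauli_op_pmult: "pauli_op n a \<Longrightarrow> pauli_op n b \<Longrightarrow> pauli_op n (pmult a b)"
  by (auto simp: pauli_op_def pmult_def)

lemma pauli_op_pid [simp]: "pauli_op n (pid n)"
  by (simp add: pauli_op_def pid_def)

lemma pmult_pid_left: "pauli_op n p \<Longrightarrow> pmult (pid n) p = p"
  by (cases p) (auto simp: pauli_op_def pmult_def pid_def tensor_PI_left)

lemma pmult_pid_right: "pauli_op n p \<Longrightarrow> pmult p (pid n) = p"
  by (cases p) (auto simp: pauli_op_def pmult_def pid_def tensor_PI_right)

lemma pmult_self: "pmult p p = ((2 * fst p) mod 4, replicate (length (snd p)) PI)"
  by (simp add: pmult_def tensor_self mult_2)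

lemma hermitian_iff_pmult_self: "hermitian n p \<longleftrightarrow> pauli_op n p \<and> pmult p p = pid n"
proof -
  have "(2 * k) mod 4 = 0 \<longleftrightarrow> k = 0 \<or> k = 2" if "k < 4" for k :: nat
    using that by presburger
  then show ?thesis
    by (cases p) (auto simp: hermitian_def pauli_op_def pmult_self pid_def)
qed

lemma pauli_op_pneg: "pauli_op n p \<Longrightarrow> pauli_op n (pneg p)"
  by (simp add: pauli_op_def pneg_def)

lemma pmult_pneg_right: "pmult a (pneg b) = pneg (pmult a b)"
  unfolding pmult_def pneg_def
  by (simp only: fst_conv snd_conv mod_add3_middle_eq mod_add_left_eq) (simp add: ac_simps)

lemma pmult_pneg_left: "pmult (pneg a) b = pneg (pmult a b)"
  unfolding pmult_def pneg_def
  by (simp only: fst_conv snd_conv mod_add3_left_eq mod_add_left_eq) (simp add: ac_simps)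

lemma sign_id_0: "sign_id n 0 = pid n"
  by (simp add: sign_id_def pid_def)

lemma sign_id_1: "sign_id n 1 = pneg (pid n)"
  by (simp add: sign_id_def pid_def pneg_def)

lemma pcommute_refl [simp]: "pcommute a a"
  by (simp add: pcommute_def)

lemma pcommute_sym: "pcommute a b \<Longrightarrow> pcommute b a"
  by (simp add: pcommute_def)

lemma pcommute_pmult:
  assumes "pauli_op n d" "pauli_op n a" "pauli_op n b" "pcommute d a" "pcommute d b"
  shows "pcommute d (pmult a b)"
proof -
  have "pmult d (pmult a b) = pmult (pmult d a) b"
    by (rule pmult_assoc[OF assms(1-3), symmetric])
  also have "\<dots> = pmult a (pmult d b)"
    using assms(4) pmult_assoc[OF assms(2,1,3)] by (simp add: pcommute_def)
  also have "\<dots> = pmult (pmult a b) d"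
    using assms(5) pmult_assoc[OF assms(2,3,1)] by (simp add: pcommute_def)
  finally show ?thesis
    by (simp add: pcommute_def)
qed

lemma pcommute_foldr:
  assumes "pauli_op n d" "pcommute d c" "pauli_op n c" "\<forall>l\<in>set ls. pcommute d l \<and> pauli_op n l"
  shows "pcommute d (foldr pmult ls c)" "pauli_op n (foldr pmult ls c)"
  using assms(4)
  by (induction ls) (auto simp: assms(2,3) intro: pcommute_pmult[OF assms(1)] pauli_op_pmult)

lemma hermitian_pmult:
  assumes "hermitian n a" "hermitian n b" "pcommute a b"
  shows "hermitian n (pmult a b)"
proof -
  have a: "pauli_op n a" "pmult a a = pid n" and b: "pauli_op n b" "pmult b b = pid n"
    using assms(1,2) by (auto simp: hermitian_iff_pmult_self)
  have "pmult (pmult a b) (pmult a b) = pmult a (pmult b (pmult b a))"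
    using assms(3) pmult_assoc[OF a(1) b(1) pauli_op_pmult[OF b(1) a(1)]]
    by (simp add: pcommute_def)
  also have "\<dots> = pmult a a"
    using pmult_assoc[OF b(1) b(1) a(1)] b(2) pmult_pid_left[OF a(1)] by simp
  finally show ?thesis
    using a b by (simp add: hermitian_iff_pmult_self pauli_op_pmult)
qed

lemma pmult_left_cancel:
  assumes "hermitian n a" "pauli_op n b" "pauli_op n c" "pmult a b = pmult a c"
  shows "b = c"
proof -
  have a: "pauli_op n a" "pmult a a = pid n"
    using assms(1) by (auto simp: hermitian_iff_pmult_self)
  have "b = pmult (pmult a a) b"
    using a(2) pmult_pid_left[OF assms(2)] by simp
  also have "\<dots> = pmult (pmult a a) c"
    using assms(4) pmult_assoc[OF a(1) a(1) assms(2)] pmult_assoc[OF a(1) a(1) assms(3)] by simp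
  also have "\<dots> = c"
    using a(2) pmult_pid_left[OF assms(3)] by simp
  finally show ?thesis .
qed

lemma pmult_right_cancel:
  assumes "hermitian n a" "pauli_op n b" "pauli_op n c" "pmult b a = pmult c a"
  shows "b = c"
proof -
  have a: "pauli_op n a" "pmult a a = pid n"
    using assms(1) by (auto simp: hermitian_iff_pmult_self)
  have "b = pmult b (pmult a a)"
    using a(2) pmult_pid_right[OF assms(2)] by simp
  also have "\<dots> = pmult c (pmult a a)"
    using assms(4) pmult_assoc[OF assms(2) a(1) a(1)] pmult_assoc[OF assms(3) a(1) a(1)] by simp
  also have "\<dots> = c"
    using a(2) pmult_pid_right[OF assms(3)] by simp
  finally show ?thesis .
qed

lemma hermitian_partial_closure:
  assumes "\<forall>y\<in>X. hermitian n y" "y \<in> partial_closure n X"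
  shows "hermitian n y"
  using assms(2)
proof induction
  case ident
  show ?case by (simp add: hermitian_def pid_def pauli_op_def)
qed (use assms(1) hermitian_pmult in blast)+

lemma finite_pauli_op: "finite {p. pauli_op n p}"
proof -
  have "finite (UNIV :: pauli1 set)"
  proof -
    have "(UNIV :: pauli1 set) = {PI, PX, PY, PZ}"
      using pauli1.exhaust by auto
    then show ?thesis
      by (metis finite.emptyI finite.insertI)
  qed
  then have "finite ({..<4::nat} \<times> {xs :: pauli1 list. set xs \<subseteq> UNIV \<and> length xs = n})"
    by (intro finite_cartesian_product finite_lists_length_eq) auto
  then show ?thesis
    by (rule finite_subset[rotated]) (auto simp: pauli_op_def)
qed

lemma finite_partial_closure:
  assumes "\<forall>y\<in>X. hermitian n y"
  shows "finite (partial_closure n X)"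
proof (rule finite_subset[OF _ finite_pauli_op])
  show "partial_closure n X \<subseteq> {p. pauli_op n p}"
    using hermitian_partial_closure[OF assms] by (auto simp: hermitian_def)
qed

lemma bit_add_self_left: "(b :: bit) + (b + c) = c"
  by (cases b) simp_all

lemma sum_list_bit_eq_sum_odd_count:
  "sum_list (map (g :: 'a \<Rightarrow> bit) xs) = (\<Sum>p\<in>{p. odd (count_list xs p)}. g p)"
proof (induction xs)
  case (Cons y xs)
  let ?D = "{p. odd (count_list xs p)}"
  have "?D \<subseteq> set xs"
    by (metis count_list_0_iff even_zero mem_Collect_eq subsetI)
  then have "finite ?D"
    by (rule finite_subset) simp
  show ?case
  proof (cases "y \<in> ?D")
    case True
    then have "{p. odd (count_list (y # xs) p)} = ?D - {y}"
      by auto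
    moreover have "sum_list (map g (y # xs)) = g y + (g y + sum g (?D - {y}))"
      by (simp only: list.map sum_list.Cons Cons.IH sum.remove[OF \<open>finite ?D\<close> True])
    ultimately show ?thesis
      by (simp only: bit_add_self_left)
  next
    case False
    then have "{p. odd (count_list (y # xs) p)} = insert y ?D"
      by auto
    with False Cons.IH \<open>finite ?D\<close> show ?thesis
      by simp
  qed
qed simp

lemma sum_list_map_concat:
  "sum_list (map f (concat xss)) = sum_list (map (\<lambda>xs. sum_list (map f xs)) xss)"
  by (induction xss) simp_all

definition solution :: "(pauli set \<times> (pauli \<Rightarrow> bit) \<times> bit) set \<Rightarrow> (pauli \<Rightarrow> bit) \<Rightarrow> bool" where
  "solution T g \<longleftrightarrow> (\<forall>(C, r, a)\<in>T. (\<Sum>y\<in>C. r y * g y) = a)"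

lemma theory_inconsistent_iff: "theory_inconsistent Y T \<longleftrightarrow> (\<nexists>g. solution T g)"
  by (simp add: theory_inconsistent_def solution_def)

lemma commuting_subset_in_meas_cover:
  assumes "finite Y" "S \<subseteq> Y" "pairwise_commuting S"
  obtains C where "C \<in> meas_cover Y" "S \<subseteq> C"
proof -
  let ?A = "{C. C \<subseteq> Y \<and> pairwise_commuting C}"
  have "finite ?A"
    using assms(1) by (rule finite_subset[rotated, OF finite_Pow_iff[THEN iffD2]]) blast
  moreover have "S \<in> ?A"
    using assms(2,3) by simp
  ultimately have "\<exists>C\<in>?A. S \<subseteq> C \<and> (\<forall>C'\<in>?A. C \<subseteq> C' \<longrightarrow> C = C')"
    by (rule finite_has_maximal2)
  then show ?thesis
    using that unfolding meas_cover_def by (smt (verit) mem_Collect_eq)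
qed

lemma foldr_pmult_pid: "foldr pmult (map (\<lambda>_. pid n) zs) (pid n) = pid n"
  by (induction zs) (simp_all add: pmult_pid_left)

text \<open>Extend the commuting set \<open>S\<close> to a context \<open>C\<close> of the measurement cover and take the
  indicator of \<open>S\<close> as exponent vector; the elements of \<open>C - S\<close> then contribute the identity.\<close>

lemma solution_sum_commuting:
  assumes "finite Y" "solution (linear_theory n Y) g"
    and "S \<subseteq> Y" "pairwise_commuting S"
    and "distinct ys" "set ys = S" "foldr pmult ys (pid n) = sign_id n a"
  shows "(\<Sum>y\<in>S. g y) = a"
proof -
  obtain C where C: "C \<in> meas_cover Y" "S \<subseteq> C"
    using commuting_subset_in_meas_cover assms(1,3,4) by blast
  have "finite C"
    using C(1) assms(1) finite_subset by (auto simp: meas_cover_def)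
  then obtain zs where zs: "distinct zs" "set zs = C - S"
    using finite_distinct_list by (metis finite_Diff)
  define r where "r y = (of_bool (y \<in> S) :: bit)" for y
  have "map (\<lambda>y. if r y = 1 then y else pid n) ys = ys"
    using assms(6) by (auto simp: r_def intro: map_idI)
  moreover have "map (\<lambda>y. if r y = 1 then y else pid n) zs = map (\<lambda>_. pid n) zs"
    using zs(2) by (auto simp: r_def)
  ultimately have "foldr pmult (map (\<lambda>y. if r y = 1 then y else pid n) (ys @ zs)) (pid n)
      = sign_id n a"
    using assms(7) by (simp only: map_append foldr_append foldr_pmult_pid o_apply)
  moreover have "distinct (ys @ zs)" "set (ys @ zs) = C"
    using assms(5,6) zs C(2) by auto
  ultimately have "prod_pow n C r (sign_id n a)"
    unfolding prod_pow_def by blast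
  moreover have "\<forall>y. y \<notin> C \<longrightarrow> r y = 0"
    using C(2) by (auto simp: r_def)
  ultimately have "(C, r, a) \<in> linear_theory n Y"
    using C(1) by (simp add: linear_theory_def)
  with assms(2) have "(\<Sum>y\<in>C. r y * g y) = a"
    unfolding solution_def by fastforce
  moreover have "(\<Sum>y\<in>C. r y * g y) = (\<Sum>y\<in>C \<inter> {y. y \<in> S}. g y)"
    unfolding r_def by (rule sum_of_bool_mult_eq[OF \<open>finite C\<close>])
  moreover have "C \<inter> {y. y \<in> S} = S"
    using C(2) by blast
  ultimately show ?thesis
    by argo
qed

context
  fixes n :: nat and X :: "pauli set" and g :: "pauli \<Rightarrow> bit"
  assumes hermitian_X: "\<forall>y\<in>X. hermitian n y"
    and solution_g: "solution (linear_theory n (partial_closure n X)) g"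
begin

private lemma sum_commuting:
  assumes "S \<subseteq> partial_closure n X" "pairwise_commuting S"
    and "distinct ys" "set ys = S" "foldr pmult ys (pid n) = sign_id n a"
  shows "(\<Sum>y\<in>S. g y) = a"
  using solution_sum_commuting[OF finite_partial_closure[OF hermitian_X] solution_g] assms .

private lemma pauli_op_partial_closure: "y \<in> partial_closure n X \<Longrightarrow> pauli_op n y"
  using hermitian_partial_closure[OF hermitian_X] by (auto simp: hermitian_def)

lemma solution_pid: "g (pid n) = 0"
proof -
  have "(\<Sum>y\<in>{pid n}. g y) = 0"
    by (rule sum_commuting[of _ "[pid n]"])
      (auto simp: pairwise_commuting_def sign_id_0 pmult_pid_left partial_closure.ident)
  then show ?thesis by simp
qed

lemma solution_pmult:
  assumes "a \<in> partial_closure n X" "b \<in> partial_closure n X" "pcommute a b"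
  shows "g (pmult a b) = g a + g b"
proof -
  have ha: "hermitian n a" and hb: "hermitian n b"
    using assms(1,2) hermitian_partial_closure[OF hermitian_X] by auto
  then have a: "pauli_op n a" "pmult a a = pid n" and b: "pauli_op n b" "pmult b b = pid n"
    by (auto simp: hermitian_iff_pmult_self)
  consider (unit) "a = pid n \<or> b = pid n" | (equal) "a = b"
    | (generic) "a \<noteq> pid n" "b \<noteq> pid n" "a \<noteq> b"
    by blast
  then show ?thesis
  proof cases
    case unit
    then show ?thesis
      using solution_pid pmult_pid_left[OF b(1)] pmult_pid_right[OF a(1)] by (elim disjE) simp_all
  next
    case equal
    then show ?thesis
      using a(2) solution_pid by simp
  next
    case generic
    have "pmult a b \<noteq> a"
      using pmult_left_cancel[OF ha b(1) pauli_op_pid] pmult_pid_right[OF a(1)] generic by metis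
    moreover have "pmult a b \<noteq> b"
      using pmult_right_cancel[OF hb a(1) pauli_op_pid] pmult_pid_left[OF b(1)] generic by metis
    ultimately have distinct: "distinct [a, b, pmult a b]"
      using generic by auto
    have product: "foldr pmult [a, b, pmult a b] (pid n) = sign_id n 0"
      using assms(3) pmult_assoc[OF b(1) b(1) a(1)] b(2) pmult_pid_left[OF a(1)] a(2)
        pmult_pid_right[OF pauli_op_pmult[OF a(1) b(1)]]
      by (simp add: pcommute_def sign_id_0)
    have commuting: "pairwise_commuting (set [a, b, pmult a b])"
      using pcommute_pmult[OF a(1) a(1) b(1)] pcommute_pmult[OF b(1) a(1) b(1)] assms(3)
      by (auto simp: pairwise_commuting_def intro: pcommute_sym)
    have "set [a, b, pmult a b] \<subseteq> partial_closure n X"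
      using assms partial_closure.prod by auto
    then have "(\<Sum>y\<in>set [a, b, pmult a b]. g y) = 0"
      by (rule sum_commuting[OF _ commuting distinct refl product])
    with distinct have "g a + (g b + g (pmult a b)) = 0"
      by (simp add: sum_list_distinct_conv_sum_set[symmetric])
    then show ?thesis
      by (cases "g a"; cases "g b"; cases "g (pmult a b)") simp_all
  qed
qed

lemma solution_pneg:
  assumes "x \<in> partial_closure n X" "pneg x \<in> partial_closure n X"
  shows "g (pneg x) = g x + 1"
proof -
  have x: "pauli_op n x" "pmult x x = pid n"
    using assms(1) hermitian_partial_closure[OF hermitian_X] by (auto simp: hermitian_iff_pmult_self)
  have "fst x < 4"
    using x(1) by (simp add: pauli_op_def)
  then have "fst x \<noteq> (fst x + 2) mod 4"
    by presburger
  then have "x \<noteq> pneg x"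
    unfolding pneg_def by (metis fst_conv)
  then have distinct: "distinct [x, pneg x]"
    by simp
  have product: "foldr pmult [x, pneg x] (pid n) = sign_id n 1"
    using x pmult_pid_right[OF pauli_op_pneg[OF x(1)]] by (simp add: pmult_pneg_right sign_id_1)
  have commuting: "pairwise_commuting (set [x, pneg x])"
    by (auto simp: pairwise_commuting_def pcommute_def pmult_pneg_left pmult_pneg_right)
  have "set [x, pneg x] \<subseteq> partial_closure n X"
    using assms by simp
  then have "(\<Sum>y\<in>set [x, pneg x]. g y) = 1"
    by (rule sum_commuting[OF _ commuting distinct refl product])
  with distinct have "g x + g (pneg x) = 1"
    by (simp add: sum_list_distinct_conv_sum_set[symmetric])
  then show ?thesis
    by (cases "g x"; cases "g (pneg x)") simp_all
qed

lemma foldr_pmult_solution: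
  assumes "set (c # ls) \<subseteq> partial_closure n X" "pairwise_commuting (set (c # ls))"
  shows "foldr pmult ls c \<in> partial_closure n X \<and> g (foldr pmult ls c) = g c + sum_list (map g ls)"
  using assms
proof (induction ls)
  case (Cons l ls)
  have ops: "pauli_op n y" if "y \<in> set (c # l # ls)" for y
    using Cons.prems(1) that by (blast intro: pauli_op_partial_closure)
  have IH: "foldr pmult ls c \<in> partial_closure n X" "g (foldr pmult ls c) = g c + sum_list (map g ls)"
    using Cons.IH Cons.prems by (auto simp: pairwise_commuting_def)
  have "pcommute l (foldr pmult ls c)"
    using Cons.prems(2) unfolding pairwise_commuting_def
    by (intro pcommute_foldr(1)[where n = n]) (simp_all add: ops)
  moreover have "l \<in> partial_closure n X"
    using Cons.prems(1) by simp
  ultimately show ?case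
    using IH partial_closure.prod solution_pmult by (simp del: add_bit_eq_xor add: ac_simps)
qed simp

lemma valid_tree_solution:
  "valid_tree X t \<Longrightarrow> label t \<in> partial_closure n X \<and> g (label t) = sum_list (map g (leaves t))"
proof (induction t)
  case (PNode p ts)
  show ?case
  proof (cases ts)
    case Nil
    then show ?thesis
      using PNode.prems partial_closure.base by simp
  next
    case (Cons t ts')
    have children: "\<forall>s\<in>set ts. label s \<in> partial_closure n X \<and> g (label s) = sum_list (map g (leaves s))"
      using PNode Cons by auto
    have "\<forall>i<length ts. \<forall>j<length ts. pcommute (label (ts ! i)) (label (ts ! j))"
      using PNode.prems by (simp only: Cons valid_tree.simps) blast
    then have "pairwise_commuting (set (map label ts))"
      by (auto simp: pairwise_commuting_def in_set_conv_nth)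
    moreover have "set (map label ts) \<subseteq> partial_closure n X"
      using children by auto
    moreover have "p = foldr pmult (map label ts') (label t)"
      using PNode.prems Cons by simp
    ultimately have root: "p \<in> partial_closure n X \<and> g p = g (label t) + sum_list (map g (map label ts'))"
      using foldr_pmult_solution[of "label t" "map label ts'"] Cons by simp
    have "leaves (PNode p ts) = concat (map leaves ts)"
      using Cons by simp
    then have "sum_list (map g (leaves (PNode p ts))) = sum_list (map (\<lambda>s. sum_list (map g (leaves s))) ts)"
      by (simp only: sum_list_map_concat map_map comp_def)
    also have "\<dots> = sum_list (map (\<lambda>s. g (label s)) ts)"
      using children by (intro arg_cong[where f = sum_list] map_cong) auto
    finally show ?thesis
      using root Cons by (simp del: add_bit_eq_xor add: comp_def)
  qed
qed

lemma determining_tree_solution: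
  "determining_tree n X x t \<Longrightarrow> x \<in> partial_closure n X \<and> g x = (\<Sum>p\<in>det_set t. g p)"
  using valid_tree_solution[of t]
  by (auto simp: determining_tree_def det_set_def sum_list_bit_eq_sum_odd_count)

end

theorem mainTheorem7:
  fixes n :: nat and X :: "pauli set" and x :: pauli and \<tau> \<tau>' :: ptree
  assumes "finite X"
    and "\<forall>y\<in>X. hermitian n y"
    and "pauli_op n x"
    and "determining_tree n X x \<tau>"
    and "determining_tree n X (pneg x) \<tau>'"
    and "det_set \<tau> = det_set \<tau>'"
  shows "state_indep_AvN_partial_closure n X"
  unfolding state_indep_AvN_partial_closure_def theory_inconsistent_iff
proof
  assume "\<exists>g. solution (linear_theory n (partial_closure n X)) g"
  then obtain g where g: "solution (linear_theory n (partial_closure n X)) g" ..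
  have "x \<in> partial_closure n X" "pneg x \<in> partial_closure n X" "g x = g (pneg x)"
    using determining_tree_solution[OF assms(2) g] assms(4-6) by auto
  then have "g x = g x + 1"
    using solution_pneg[OF assms(2) g] by simp
  then show False
    by (cases "g x") simp_all
qed

end
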